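(* Fix any $\epsilon>0$. There exists a measurable set $S_\epsilon\subset\mathbb{T}^2$ with $\mu(S_\epsilon)\ge 9/32-\epsilon$ such that the following holds. For any $\theta,\alpha\in\mathbb{T}^2$ with $\{\theta,\theta+\alpha,\theta+2\alpha\}\subset S_\epsilon$, either \[2\psi(\theta+\alpha)\ge \psi(\theta)+\psi(\theta+2\alpha)+1/2,\] or otherwise, writing $d:=\frac{\pi^{-1}(\theta+2\alpha)-\pi^{-1}(\theta)}{2}\in\mathbb{R}^2$ (so that $\psi(\theta+2\alpha)=\psi(\theta)+2(d_1+d_2)$), we have \[\psi(\theta+\alpha)=\psi(\theta)+(d_1+d_2),\] and furthermore, if $|d_1+d_2|\le \frac{\epsilon}{1000}$, then \[(1-\{p(\theta)\})^2+(1-\{p(\theta+2\alpha)\})^2-2(1-\{p(\theta+\alpha)\})^2\ge d_1^2.\]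
   Context: $\mathbb{T}^2:=(\mathbb{R}/\mathbb{Z})^2$ with normalized Haar (Lebesgue) measure $\mu$. $\pi:\mathbb{R}^2\to\mathbb{T}^2$, $x\mapsto x+\mathbb{Z}^2$, and for $\theta\in\mathbb{T}^2$, $\pi^{-1}(\theta)$ denotes the unique $x\in[0,1)^2$ with $\pi(x)=\theta$. The sum map $\psi:\mathbb{T}^2\to[0,2)$ is $\psi(\theta)=\pi^{-1}(\theta)_1+\pi^{-1}(\theta)_2$. The projection $p:\mathbb{T}^2\to[0,1)$ is $p(\theta)=\pi^{-1}(\theta)_1$. For $x\in[0,1)$, $\{x\}:=x$ if $x\in[0,1/2)$ and $\{x\}:=x-1/2$ otherwise (this is not the usual fractional part). *)

theory Defs
  imports "HOL-Analysis.Analysis"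
begin

text \<open>The torus T^2 = (R/Z)^2 is represented by its canonical fundamental domain
  [0,1)^2 inside real \<times> real; a point theta of T^2 is identified with pi^{-1}(theta).
  Normalized Haar measure is Lebesgue measure restricted to [0,1)^2 (which has mass 1).\<close>

definition T2 :: "(real \<times> real) set" where
  "T2 = {0..<1} \<times> {0..<1}"

definition tadd :: "real \<times> real \<Rightarrow> real \<times> real \<Rightarrow> real \<times> real" where
  "tadd x y = (frac (fst x + fst y), frac (snd x + snd y))"

definition psi :: "real \<times> real \<Rightarrow> real" where
  "psi th = fst th + snd th"

definition proj1 :: "real \<times> real \<Rightarrow> real" where
  "proj1 th = fst th"

text \<open>The bracket {x} of the paper (not the usual fractional part).\<close>
definition brk :: "real \<Rightarrow> real" where
  "brk x = (if x < 1/2 then x else x - 1/2)"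

end

theory Submission
  imports Defs
begin

text \<open>For \<theta>, \<theta> + \<alpha>, \<theta> + 2\<alpha> with representatives (x_i, y_i) in [0,1)^2 the carries
  k = 2 x1 - x0 - x2 and l = 2 y1 - y0 - y2 are integers in {-1, 0, 1}, and
  2 \<psi>(\<theta> + \<alpha>) = \<psi>(\<theta>) + \<psi>(\<theta> + 2\<alpha>) + k + l.
  Take for S the union of the corner {x \<ge> 1/2, y < 1/2, 2x + y \<ge> 5/4} and the strip
  {x \<ge> 0, y \<ge> 1/2, 3/4 \<le> 2x + y < 1 - \<eta>} with \<eta> = \<epsilon>/500; its area is at least 9/32 - \<eta>/4.
  The shape of S forbids k + l < 0, so either k + l \<ge> 1, or \<psi> is affine along the progression.
  In the latter case, if \<psi>(\<theta>) and \<psi>(\<theta> + 2\<alpha>) are \<eta>-close, the shape also forces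
  {x0} + {x2} \<le> 2 {x1}; as {x2} - {x0} differs from x2 - x0 by at most 1/2, the quadratic
  inequality becomes an elementary estimate for the second difference of u \<mapsto> (1 - u)^2.\<close>

lemma region_between_graphs_borel:
  fixes f g :: "real \<Rightarrow> real"
  assumes [measurable]: "I \<in> sets borel" "f \<in> borel_measurable borel" "g \<in> borel_measurable borel"
  shows "{(x, y). x \<in> I \<and> f x \<le> y \<and> y < g x} \<in> sets borel"
proof -
  have "{z \<in> space (borel \<Otimes>\<^sub>M borel). fst z \<in> I \<and> f (fst z) \<le> snd z \<and> snd z < g (fst z)}
      \<in> sets (borel \<Otimes>\<^sub>M borel)"
    by measurable
  then show ?thesis
    unfolding borel_prod by (simp add: space_pair_measure case_prod_unfold)
qed

lemma emeasure_region_between_graphs: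
  fixes f g :: "real \<Rightarrow> real"
  assumes "I \<in> sets borel" "f \<in> borel_measurable borel" "g \<in> borel_measurable borel"
  shows "emeasure lborel {(x, y). x \<in> I \<and> f x \<le> y \<and> y < g x} = (\<integral>\<^sup>+x\<in>I. ennreal (g x - f x) \<partial>lborel)"
    (is "emeasure lborel ?A = _")
proof -
  have "?A \<in> sets (lborel \<Otimes>\<^sub>M lborel)"
    unfolding lborel_prod using region_between_graphs_borel[OF assms] by simp
  then have "emeasure (lborel \<Otimes>\<^sub>M lborel) ?A = (\<integral>\<^sup>+x. emeasure lborel (Pair x -` ?A) \<partial>lborel)"
    by (rule lborel.emeasure_pair_measure_alt)
  also have "\<dots> = (\<integral>\<^sup>+x\<in>I. ennreal (g x - f x) \<partial>lborel)"
  proof (rule nn_integral_cong)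
    fix x
    have "Pair x -` ?A = (if x \<in> I then {f x..<g x} else {})"
      by auto
    then show "emeasure lborel (Pair x -` ?A) = ennreal (g x - f x) * indicator I x"
      by (cases "f x \<le> g x") (auto simp: ennreal_neg)
  qed
  finally show ?thesis
    by (simp add: lborel_prod)
qed

definition trapezoid :: "real \<Rightarrow> real \<Rightarrow> real \<Rightarrow> real \<Rightarrow> real \<Rightarrow> real \<Rightarrow> (real \<times> real) set" where
  "trapezoid a b c d e f = {(x, y). x \<in> {a<..<b} \<and> c * x + d \<le> y \<and> y < e * x + f}"

lemma trapezoid_borel: "trapezoid a b c d e f \<in> sets borel"
  unfolding trapezoid_def by (rule region_between_graphs_borel) auto

lemma emeasure_trapezoid:
  assumes "a \<le> b" and below: "\<And>x. a \<le> x \<Longrightarrow> x \<le> b \<Longrightarrow> c * x + d \<le> e * x + f"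
  shows "emeasure lborel (trapezoid a b c d e f) = ennreal ((e - c) * (b\<^sup>2 - a\<^sup>2) / 2 + (f - d) * (b - a))"
proof -
  let ?F = "\<lambda>x. (e - c) * x\<^sup>2 / 2 + (f - d) * x"
  have "((\<lambda>x. (e * x + f) - (c * x + d)) has_integral ?F b - ?F a) {a..b}"
    by (rule fundamental_theorem_of_calculus[OF \<open>a \<le> b\<close>])
      (auto intro!: derivative_eq_intros simp: field_simps
        simp flip: has_real_derivative_iff_has_vector_derivative)
  then have integral: "((\<lambda>x. (e * x + f) - (c * x + d)) has_integral ?F b - ?F a) {a<..<b}"
    by (simp only: has_integral_Icc_iff_Ioo)
  have "emeasure lborel (trapezoid a b c d e f)
      = (\<integral>\<^sup>+x\<in>{a<..<b}. ennreal ((e * x + f) - (c * x + d)) \<partial>lborel)"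
    unfolding trapezoid_def by (rule emeasure_region_between_graphs) auto
  also have "\<dots> = ennreal (?F b - ?F a)"
    by (rule nn_integral_has_integral_lebesgue'[OF _ integral]) (use below in auto)
  also have "?F b - ?F a = (e - c) * (b\<^sup>2 - a\<^sup>2) / 2 + (f - d) * (b - a)"
    by (simp add: field_simps)
  finally show ?thesis .
qed

lemma Ints_frac_second_difference: "2 * frac (x + a) - x - frac (frac (x + a) + a) \<in> \<int>"
  by (simp add: frac_def)

lemma Ints_second_difference_cases:
  fixes x0 x1 x2 :: real
  assumes "x0 \<in> {0..<1}" "x1 \<in> {0..<1}" "x2 \<in> {0..<1}" and "2 * x1 - x0 - x2 \<in> \<int>"
  shows "2 * x1 - x0 - x2 \<in> {-1, 0, 1}"
proof -
  obtain k :: int where k: "2 * x1 - x0 - x2 = k"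
    using \<open>2 * x1 - x0 - x2 \<in> \<int>\<close> by (auto elim: Ints_cases)
  have "-2 < k" "k < 2"
    using assms(1-3) k by auto
  then have "k \<in> {-1, 0, 1}"
    by auto
  then show ?thesis
    using k by auto
qed

lemma sq_second_difference_ge:
  fixes b0 b1 b2 d h s :: real
  assumes "b0 + b2 \<le> 1" and "2 * b1 = b0 + b2 + h" and "2 * d = b2 - b0 + s"
    and "(h = 0 \<and> s = 0) \<or> (h = 1/2 \<and> (s = 1/2 \<or> s = -1/2))"
  shows "d\<^sup>2 \<le> (1 - b0)\<^sup>2 + (1 - b2)\<^sup>2 - 2 * (1 - b1)\<^sup>2"
proof -
  have b1: "b1 = (b0 + b2 + h) / 2" and d: "d = (b2 - b0 + s) / 2"
    using assms(2,3) by simp_all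
  have "0 \<le> 4 * h * (2 - b0 - b2) - 2 * s\<^sup>2 - 2 * h\<^sup>2"
    using assms(4,1) by (elim disjE conjE; hypsubst; simp add: power2_eq_square; linarith)
  then have "0 \<le> ((b2 - b0 - s)\<^sup>2 + (4 * h * (2 - b0 - b2) - 2 * s\<^sup>2 - 2 * h\<^sup>2)) / 4"
    by simp
  also have "\<dots> = (1 - b0)\<^sup>2 + (1 - b2)\<^sup>2 - 2 * (1 - b1)\<^sup>2 - d\<^sup>2"
    unfolding b1 d by (simp add: power2_eq_square field_simps)
  finally show ?thesis
    by simp
qed

lemma brk_cases: "x \<in> {0..<1} \<Longrightarrow> (x < 1/2 \<and> brk x = x) \<or> (1/2 \<le> x \<and> brk x = x - 1/2)"
  by (auto simp: brk_def)

lemma brk_sq_second_difference_ge: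
  fixes x0 x1 x2 :: real
  assumes "x0 \<in> {0..<1}" "x1 \<in> {0..<1}" "x2 \<in> {0..<1}" and "2 * x1 - x0 - x2 \<in> {-1, 0, 1}"
    and "brk x0 + brk x2 \<le> 2 * brk x1"
  shows "((x2 - x0) / 2)\<^sup>2 \<le> (1 - brk x0)\<^sup>2 + (1 - brk x2)\<^sup>2 - 2 * (1 - brk x1)\<^sup>2"
proof -
  let ?h = "2 * brk x1 - brk x0 - brk x2" and ?s = "(x2 - x0) - (brk x2 - brk x0)"
  \<comment> \<open>brk subtracts 0 or 1/2, so the second differences of x and of brk x differ by a half-integer\<close>
  have shape: "(?h = 0 \<and> ?s = 0) \<or> (?h = 1/2 \<and> (?s = 1/2 \<or> ?s = -1/2))"
    using assms(1-5) unfolding brk_def by (simp add: field_simps) argo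
  have bound: "brk x0 + brk x2 \<le> 1"
    using assms(1,3) brk_cases[OF assms(1)] brk_cases[OF assms(3)] by auto
  show ?thesis
    by (rule sq_second_difference_ge[OF bound _ _ shape]) simp_all
qed

definition good_set :: "real \<Rightarrow> (real \<times> real) set" where
  "good_set \<eta> = {(x, y).
     (1/2 \<le> x \<and> x < 1 \<and> 0 \<le> y \<and> y < 1/2 \<and> 5/4 \<le> 2 * x + y) \<or>
     (0 \<le> x \<and> 1/2 \<le> y \<and> y < 1 \<and> 3/4 \<le> 2 * x + y \<and> 2 * x + y < 1 - \<eta>)}"

lemma good_set_subset_T2: "0 \<le> \<eta> \<Longrightarrow> good_set \<eta> \<subseteq> T2"
  by (auto simp: good_set_def T2_def)

lemma good_set_borel: "good_set \<eta> \<in> sets borel"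
proof -
  have "{z \<in> space (borel \<Otimes>\<^sub>M borel).
      (1/2 \<le> fst z \<and> fst z < 1 \<and> 0 \<le> snd z \<and> snd z < 1/2 \<and> 5/4 \<le> 2 * fst z + snd z) \<or>
      (0 \<le> fst z \<and> 1/2 \<le> snd z \<and> snd z < 1 \<and> 3/4 \<le> 2 * fst z + snd z \<and> 2 * fst z + snd z < 1 - \<eta>)}
    \<in> sets (borel \<Otimes>\<^sub>M borel)"
    by measurable
  then show ?thesis
    unfolding borel_prod by (simp add: good_set_def space_pair_measure case_prod_unfold)
qed

lemma emeasure_good_set_ge:
  assumes "0 \<le> \<eta>" "\<eta> \<le> 1/4"
  shows "ennreal (9/32 - \<eta>/4 + \<eta>\<^sup>2/4) \<le> emeasure lborel (good_set \<eta>)"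
proof -
  define R1 R2 C1 C2 where
    "R1 = trapezoid (1/2) (5/8) (-2) (5/4) 0 (1/2)" and
    "R2 = trapezoid (5/8) 1 0 0 0 (1/2)" and
    "C1 = trapezoid 0 (1/8) (-2) (3/4) (-2) (1 - \<eta>)" and
    "C2 = trapezoid (1/8) ((1/2 - \<eta>) / 2) 0 (1/2) (-2) (1 - \<eta>)"
  have areas: "emeasure lborel R1 = ennreal (3/64)" "emeasure lborel R2 = ennreal (3/16)"
    "emeasure lborel C1 = ennreal ((1/4 - \<eta>) / 8)"
    unfolding R1_def R2_def C1_def using assms
    by (subst emeasure_trapezoid; force simp: field_simps)+
  have "emeasure lborel C2 = ennreal ((-2 - 0) * (((1/2 - \<eta>) / 2)\<^sup>2 - (1/8)\<^sup>2) / 2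
      + ((1 - \<eta>) - 1/2) * ((1/2 - \<eta>) / 2 - 1/8))"
    unfolding C2_def using assms by (intro emeasure_trapezoid) auto
  also have "\<dots> = ennreal ((1/8 - \<eta>/2)\<^sup>2)"
    by (rule arg_cong[where f = ennreal]) (simp add: power2_eq_square field_simps)
  finally have area_C2: "emeasure lborel C2 = ennreal ((1/8 - \<eta>/2)\<^sup>2)" .
  have sets: "R1 \<in> sets lborel" "R2 \<in> sets lborel" "C1 \<in> sets lborel" "C2 \<in> sets lborel"
    unfolding R1_def R2_def C1_def C2_def by (simp_all add: trapezoid_borel)
  have "R1 \<inter> R2 = {}" "(R1 \<union> R2) \<inter> C1 = {}" "(R1 \<union> R2 \<union> C1) \<inter> C2 = {}"
    using assms unfolding R1_def R2_def C1_def C2_def trapezoid_def by auto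
  then have "emeasure lborel (R1 \<union> R2 \<union> C1 \<union> C2)
      = emeasure lborel R1 + emeasure lborel R2 + emeasure lborel C1 + emeasure lborel C2"
    using sets by (simp add: plus_emeasure)
  also have "\<dots> = ennreal (3/64 + 3/16 + (1/4 - \<eta>) / 8 + (1/8 - \<eta>/2)\<^sup>2)"
    using assms by (simp add: areas area_C2 ennreal_plus[symmetric] del: ennreal_plus)
  also have "3/64 + 3/16 + (1/4 - \<eta>) / 8 + (1/8 - \<eta>/2)\<^sup>2 = 9/32 - \<eta>/4 + \<eta>\<^sup>2/4"
    by (simp add: power2_eq_square field_simps)
  finally have "emeasure lborel (R1 \<union> R2 \<union> C1 \<union> C2) = ennreal (9/32 - \<eta>/4 + \<eta>\<^sup>2/4)" .
  moreover have "R1 \<union> R2 \<union> C1 \<union> C2 \<subseteq> good_set \<eta>"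
    using assms by (auto simp: R1_def R2_def C1_def C2_def trapezoid_def good_set_def)
  ultimately show ?thesis
    by (metis emeasure_mono good_set_borel sets_lborel)
qed

lemma measure_good_set_ge:
  assumes "0 \<le> \<eta>" "\<eta> \<le> 1/4"
  shows "9/32 - \<eta>/4 \<le> measure lebesgue (good_set \<eta>)"
proof -
  have "good_set \<eta> \<subseteq> cbox (0, 0) (1, 1)"
    using good_set_subset_T2[OF assms(1)] by (auto simp: T2_def cbox_Pair_eq)
  then have "bounded (good_set \<eta>)"
    using bounded_cbox bounded_subset by blast
  then have "emeasure lborel (good_set \<eta>) = ennreal (measure lborel (good_set \<eta>))"
    by (intro emeasure_eq_measure2 fmeasurableI emeasure_bounded_finite) (simp_all add: good_set_borel)
  with emeasure_good_set_ge[OF assms] have "9/32 - \<eta>/4 + \<eta>\<^sup>2/4 \<le> measure lborel (good_set \<eta>)"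
    by simp
  then have "9/32 - \<eta>/4 \<le> measure lborel (good_set \<eta>)"
    using zero_le_power2[of \<eta>] by linarith
  then show ?thesis
    by (simp add: good_set_borel)
qed

text \<open>With w = 2x + y, the corner has w \<ge> 5/4 and the strip w < 1, while the carries k, l satisfy
  2 w1 - w0 - w2 = 2k + l; this rules out k + l < 0.\<close>

lemma good_set_psi_midpoint_le:
  assumes "(x0, y0) \<in> good_set \<eta>" "(x1, y1) \<in> good_set \<eta>" "(x2, y2) \<in> good_set \<eta>" "0 \<le> \<eta>"
    and "2 * x1 - x0 - x2 \<in> {-1, 0, 1}" "2 * y1 - y0 - y2 \<in> {-1, 0, 1}"
  shows "(x0 + y0) + (x2 + y2) \<le> 2 * (x1 + y1)"
  using assms unfolding good_set_def by (simp add: field_simps) argo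

lemma good_set_brk_midpoint_le:
  assumes "(x0, y0) \<in> good_set \<eta>" "(x1, y1) \<in> good_set \<eta>" "(x2, y2) \<in> good_set \<eta>" "0 \<le> \<eta>"
    and "2 * x1 - x0 - x2 \<in> {-1, 0, 1}" "2 * (x1 + y1) = (x0 + y0) + (x2 + y2)"
    and "\<bar>(x2 + y2) - (x0 + y0)\<bar> \<le> \<eta>"
  shows "brk x0 + brk x2 \<le> 2 * brk x1"
  using assms unfolding good_set_def brk_def by (simp add: field_simps abs_if) argo

lemma good_set_progression:
  fixes \<theta> \<alpha> :: "real \<times> real"
  defines "\<theta>1 \<equiv> tadd \<theta> \<alpha>" and "\<theta>2 \<equiv> tadd (tadd \<theta> \<alpha>) \<alpha>"
  defines "d1 \<equiv> (fst \<theta>2 - fst \<theta>) / 2" and "d2 \<equiv> (snd \<theta>2 - snd \<theta>) / 2"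
  assumes "0 \<le> \<eta>" and "\<theta> \<in> good_set \<eta>" "\<theta>1 \<in> good_set \<eta>" "\<theta>2 \<in> good_set \<eta>"
  shows "psi \<theta> + psi \<theta>2 + 1/2 \<le> 2 * psi \<theta>1 \<or>
    (psi \<theta>1 = psi \<theta> + (d1 + d2) \<and>
     (\<bar>d1 + d2\<bar> \<le> \<eta> / 2 \<longrightarrow>
        d1\<^sup>2 \<le> (1 - brk (proj1 \<theta>))\<^sup>2 + (1 - brk (proj1 \<theta>2))\<^sup>2 - 2 * (1 - brk (proj1 \<theta>1))\<^sup>2))"
proof -
  obtain x0 y0 x1 y1 x2 y2 where
    \<theta>: "\<theta> = (x0, y0)" and \<theta>1: "\<theta>1 = (x1, y1)" and \<theta>2: "\<theta>2 = (x2, y2)"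
    by (metis surj_pair)
  have in_good: "(x0, y0) \<in> good_set \<eta>" "(x1, y1) \<in> good_set \<eta>" "(x2, y2) \<in> good_set \<eta>"
    using assms(6-8) \<theta> \<theta>1 \<theta>2 by simp_all
  then have unit: "x0 \<in> {0..<1}" "x1 \<in> {0..<1}" "x2 \<in> {0..<1}"
      "y0 \<in> {0..<1}" "y1 \<in> {0..<1}" "y2 \<in> {0..<1}"
    using good_set_subset_T2[OF \<open>0 \<le> \<eta>\<close>] by (auto simp: T2_def)
  have x: "x1 = frac (x0 + fst \<alpha>)" "x2 = frac (x1 + fst \<alpha>)"
    and y: "y1 = frac (y0 + snd \<alpha>)" "y2 = frac (y1 + snd \<alpha>)"
    using \<theta> \<theta>1 \<theta>2 by (auto simp: \<theta>1_def \<theta>2_def tadd_def)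
  have "2 * x1 - x0 - x2 \<in> \<int>" "2 * y1 - y0 - y2 \<in> \<int>"
    unfolding x y by (rule Ints_frac_second_difference)+
  then have carries: "2 * x1 - x0 - x2 \<in> {-1, 0, 1}" "2 * y1 - y0 - y2 \<in> {-1, 0, 1}"
    using Ints_second_difference_cases unit by simp_all
  have psi: "psi \<theta> = x0 + y0" "psi \<theta>1 = x1 + y1" "psi \<theta>2 = x2 + y2"
    and d: "d1 = (x2 - x0) / 2" "d2 = (y2 - y0) / 2"
    by (simp_all add: \<theta> \<theta>1 \<theta>2 psi_def d1_def d2_def)
  show ?thesis
  proof (cases "psi \<theta> + psi \<theta>2 + 1/2 \<le> 2 * psi \<theta>1")
    case False
    then have affine: "2 * (x1 + y1) = (x0 + y0) + (x2 + y2)"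
      using carries good_set_psi_midpoint_le[OF in_good \<open>0 \<le> \<eta>\<close> carries] unfolding psi by auto
    then have "psi \<theta>1 = psi \<theta> + (d1 + d2)"
      unfolding psi d by (simp add: field_simps)
    moreover have "d1\<^sup>2 \<le> (1 - brk (proj1 \<theta>))\<^sup>2 + (1 - brk (proj1 \<theta>2))\<^sup>2 - 2 * (1 - brk (proj1 \<theta>1))\<^sup>2"
      if "\<bar>d1 + d2\<bar> \<le> \<eta> / 2"
    proof -
      have "\<bar>(x2 + y2) - (x0 + y0)\<bar> \<le> \<eta>"
        using that by (auto simp: abs_le_iff d field_simps)
      with good_set_brk_midpoint_le[OF in_good \<open>0 \<le> \<eta>\<close> carries(1) affine]
      show ?thesis
        using brk_sq_second_difference_ge[OF unit(1-3) carries(1)] by (simp add: \<theta> \<theta>1 \<theta>2 proj1_def d)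
    qed
    ultimately show ?thesis
      by blast
  qed simp
qed

theorem proposition3p3:
  fixes \<epsilon> :: real
  assumes "\<epsilon> > 0"
  shows "\<exists>S. S \<subseteq> T2 \<and> S \<in> sets lebesgue \<and> measure lebesgue S \<ge> 9/32 - \<epsilon> \<and>
    (\<forall>\<theta>\<in>T2. \<forall>\<alpha>\<in>T2.
       (\<theta> \<in> S \<and> tadd \<theta> \<alpha> \<in> S \<and> tadd (tadd \<theta> \<alpha>) \<alpha> \<in> S) \<longrightarrow>
       (let \<theta>1 = tadd \<theta> \<alpha>; \<theta>2 = tadd (tadd \<theta> \<alpha>) \<alpha>;
            d1 = (fst \<theta>2 - fst \<theta>) / 2; d2 = (snd \<theta>2 - snd \<theta>) / 2
        in 2 * psi \<theta>1 \<ge> psi \<theta> + psi \<theta>2 + 1/2 \<or>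
           (psi \<theta>1 = psi \<theta> + (d1 + d2) \<and>
            (\<bar>d1 + d2\<bar> \<le> \<epsilon> / 1000 \<longrightarrow>
               (1 - brk (proj1 \<theta>))\<^sup>2 + (1 - brk (proj1 \<theta>2))\<^sup>2
                 - 2 * (1 - brk (proj1 \<theta>1))\<^sup>2 \<ge> d1\<^sup>2))))"
proof (cases "\<epsilon> < 9/32")
  case False
  then show ?thesis
    by (intro exI[of _ "{}"]) auto
next
  case True
  define \<eta> where "\<eta> = \<epsilon> / 500"
  have \<eta>: "0 \<le> \<eta>" "\<eta> \<le> 1/4" and half_\<eta>: "\<eta> / 2 = \<epsilon> / 1000"
    using assms True by (simp_all add: \<eta>_def)
  show ?thesis
  proof (intro exI[of _ "good_set \<eta>"] conjI ballI impI)
    show "good_set \<eta> \<subseteq> T2"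
      using good_set_subset_T2[OF \<eta>(1)] .
    show "good_set \<eta> \<in> sets lebesgue"
      using good_set_borel by simp
    show "9/32 - \<epsilon> \<le> measure lebesgue (good_set \<eta>)"
      using measure_good_set_ge[OF \<eta>] assms by (simp add: \<eta>_def)
  qed (unfold Let_def half_\<eta>[symmetric], use good_set_progression[OF \<eta>(1)] in blast)
qed

end
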